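(* Let $k$ be an algebraically closed field, let $\lambda$ be a partition of $n$ (with $\lambda_j=0$ beyond its length), and let $\mathcal O_\lambda\subseteq\mathfrak{gl}_n(k)$ be the nilpotent orbit of matrices with Jordan block sizes $\lambda$. For each $i\in\{1,\dots,n-1\}$ there exists $X\in\mathcal O_\lambda$ such that $X_{\le i,\le i}$ has stable rank exactly $d_{\lambda,i}:=i-\sum_{j>n-i}\lambda_j$.
   Context: $X_{\le i,\le i}$ is the submatrix of the first $i$ rows and columns. For an $i\times i$ matrix $Y$, $s_j(Y)$ is the sum of the principal $j\times j$ minors of $Y$; the stable rank of $Y$ is the largest $j$ with $s_j(Y)\ne0$, equivalently the number of nonzero eigenvalues counted with algebraic multiplicity. *)

theory Defs
  imports "HOL-Computational_Algebra.Polynomial" "Jordan_Normal_Form.Jordan_Normal_Form"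
    "Jordan_Normal_Form.DL_Submatrix"
begin

text \<open>A partition of n: a weakly decreasing list of positive parts summing to n.
  Parts beyond the length are implicitly 0.\<close>
definition is_partition :: "nat list \<Rightarrow> nat \<Rightarrow> bool" where
  "is_partition lam n \<longleftrightarrow> sorted_wrt (\<ge>) lam \<and> (\<forall>p\<in>set lam. 0 < p) \<and> sum_list lam = n"

definition nilpotent_orbit :: "nat \<Rightarrow> nat list \<Rightarrow> 'a::field mat set" where
  "nilpotent_orbit n lam =
     {X \<in> carrier_mat n n. similar_mat X (jordan_matrix (map (\<lambda>s. (s, 0)) lam))}"

definition lead_sub :: "'a mat \<Rightarrow> nat \<Rightarrow> 'a mat" where
  "lead_sub X i = submatrix X {..<i} {..<i}"

definition principal_minor_sum :: "'a::comm_ring_1 mat \<Rightarrow> nat \<Rightarrow> 'a" where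
  "principal_minor_sum Y j =
     (\<Sum>S\<in>{S. S \<subseteq> {..<dim_row Y} \<and> card S = j}. det (submatrix Y S S))"

text \<open>Stable rank: the largest j with s_j(Y) nonzero (s_0 = 1, so this is well defined).\<close>
definition stable_rank :: "'a::comm_ring_1 mat \<Rightarrow> nat" where
  "stable_rank Y = (GREATEST j. j \<le> dim_row Y \<and> principal_minor_sum Y j \<noteq> 0)"

text \<open>d_{lambda,i} = i - sum_{j > n-i} lambda_j  (1-indexed parts).\<close>
definition d_lam :: "nat \<Rightarrow> nat list \<Rightarrow> nat \<Rightarrow> int" where
  "d_lam n lam i = int i - int (sum_list (drop (n - i) lam))"

end

theory Submission
  imports Defs
begin

text \<open>Put \<open>t = n - i\<close> and let \<open>s\<close> be the sum of the parts after the \<open>t\<close>-th, so that the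
  claimed stable rank is \<open>i - s\<close>. The orbit contains the block diagonal matrix whose blocks are \<open>P\<^sup>-\<^sup>1 J\<^sub>m P\<close>
  (\<open>P\<close> the Pascal matrix) for the first \<open>t\<close> parts and \<open>J\<^sub>m\<close> for the others. All its rows except
  the last row of each Pascal block vanish left of the diagonal, with diagonal entry \<open>1\<close> in a
  Pascal block and \<open>0\<close> in a Jordan block. The \<open>s\<close> rows of the Jordan blocks together with \<open>i - s\<close>
  such rows of Pascal blocks index an upper triangular principal submatrix with exactly \<open>i - s\<close>
  nonzero diagonal entries, hence of stable rank \<open>i - s\<close>, and a permutation similarity moves it
  to the leading position.\<close>

section \<open>Principal submatrices and permutation similarity\<close>

lemma bij_betw_pick: "finite S \<Longrightarrow> bij_betw (pick S) {..<card S} S"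
proof (rule bij_betw_imageI)
  show "inj_on (pick S) {..<card S}"
    by (rule inj_onI, metis lessThan_iff nat_neq_iff pick_mono_le)
  assume "finite S"
  show "pick S ` {..<card S} = S"
  proof
    show "pick S ` {..<card S} \<subseteq> S" using pick_in_set_le by auto
    show "S \<subseteq> pick S ` {..<card S}"
    proof
      fix x assume x: "x \<in> S"
      have "card {a\<in>S. a < x} < card S"
        using x \<open>finite S\<close> by (intro psubset_card_mono) auto
      then show "x \<in> pick S ` {..<card S}" using pick_card_in_set[OF x] by force
    qed
  qed
qed

lemma pick_lessThan:
  assumes "p < i"
  shows "pick {..<i} p = p"
proof -
  have "{a. a < i \<and> a \<in> (UNIV::nat set)} = {..<i}" by auto
  moreover have "card {a. a < i \<and> a \<in> (UNIV::nat set)} = i" by simp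
  then have "pick UNIV p = pick {a. a < i \<and> a \<in> (UNIV::nat set)} p"
    using assms pick_reduce_set[of p i UNIV] by simp
  ultimately show ?thesis by (simp add: pick_UNIV)
qed

definition perm_mat :: "nat \<Rightarrow> (nat \<Rightarrow> nat) \<Rightarrow> 'a::{zero,one} mat" where
  "perm_mat n f = mat n n (\<lambda>(p,k). if f p = k then 1 else 0)"

lemma perm_mat_dim[simp]: "dim_row (perm_mat n f) = n" "dim_col (perm_mat n f) = n"
  by (simp_all add: perm_mat_def)

lemma perm_mat_carrier[simp]: "perm_mat n f \<in> carrier_mat n n"
  by (simp add: carrier_matI)

lemma perm_mat_mult_index:
  fixes A :: "'a::comm_ring_1 mat"
  assumes "A \<in> carrier_mat n nc" and "p < n" "f p < n" "l < nc"
  shows "(perm_mat n f * A) $$ (p,l) = A $$ (f p, l)"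
proof -
  have "(perm_mat n f * A) $$ (p,l) = (\<Sum>k = 0..<n. (if f p = k then 1 else 0) * A $$ (k,l))"
    using assms by (simp add: perm_mat_def scalar_prod_def)
  also have "\<dots> = (\<Sum>k = 0..<n. if k = f p then A $$ (k,l) else 0)"
    by (rule sum.cong) auto
  also have "\<dots> = A $$ (f p, l)"
    using assms by simp
  finally show ?thesis .
qed

lemma perm_mat_mult_transpose:
  assumes f: "bij_betw f {..<n} {..<n}"
  shows "perm_mat n f * transpose_mat (perm_mat n f) = (1\<^sub>m n :: 'a::comm_ring_1 mat)"
proof (rule eq_matI)
  fix p q assume "p < dim_row (1\<^sub>m n :: 'a mat)" "q < dim_col (1\<^sub>m n :: 'a mat)"
  then have pq: "p < n" "q < n" and fpq: "f p < n" "f q < n" using f by (auto simp: bij_betw_def)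
  have "(perm_mat n f * transpose_mat (perm_mat n f)) $$ (p,q) =
      transpose_mat (perm_mat n f :: 'a mat) $$ (f p, q)"
    using pq fpq by (intro perm_mat_mult_index) auto
  also have "\<dots> = (if f q = f p then 1 else 0)"
    using pq fpq by (simp add: perm_mat_def)
  also have "\<dots> = 1\<^sub>m n $$ (p,q)"
    using pq f by (auto simp: bij_betw_def inj_on_def)
  finally show "(perm_mat n f * transpose_mat (perm_mat n f)) $$ (p,q) = (1\<^sub>m n :: 'a mat) $$ (p,q)" .
qed auto

lemma perm_mat_conjugate:
  fixes A :: "'a::comm_ring_1 mat"
  assumes A: "A \<in> carrier_mat n n" and f: "\<And>p. p < n \<Longrightarrow> f p < n"
  shows "perm_mat n f * A * transpose_mat (perm_mat n f) = mat n n (\<lambda>(p,q). A $$ (f p, f q))"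
proof (rule eq_matI)
  define P :: "'a mat" where "P = perm_mat n f"
  have P: "P \<in> carrier_mat n n" by (simp add: P_def)
  have P_mult: "(P * B) $$ (p,l) = B $$ (f p, l)" if "B \<in> carrier_mat n n" "p < n" "l < n" for B p l
    unfolding P_def using that f by (intro perm_mat_mult_index) auto
  fix p q assume "p < dim_row (mat n n (\<lambda>(p,q). A $$ (f p, f q)))"
    "q < dim_col (mat n n (\<lambda>(p,q). A $$ (f p, f q)))"
  then have pq: "p < n" "q < n" by auto
  have "P * A * transpose_mat P = transpose_mat (P * transpose_mat (P * A))"
    using P A by (simp add: transpose_mult[of P n n "transpose_mat (P * A)" n])
  then have "(P * A * transpose_mat P) $$ (p,q) = transpose_mat (P * transpose_mat (P * A)) $$ (p,q)"
    by (rule arg_cong)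
  also have "\<dots> = (P * transpose_mat (P * A)) $$ (q,p)"
    using P A pq by (subst index_transpose_mat) auto
  also have "\<dots> = transpose_mat (P * A) $$ (f q, p)"
    by (rule P_mult) (use P A pq in auto)
  also have "\<dots> = (P * A) $$ (p, f q)" using P A pq f by (subst index_transpose_mat) auto
  also have "\<dots> = A $$ (f p, f q)" by (rule P_mult[OF A pq(1) f[OF pq(2)]])
  also have "\<dots> = mat n n (\<lambda>(p,q). A $$ (f p, f q)) $$ (p,q)" using pq by simp
  finally show "(perm_mat n f * A * transpose_mat (perm_mat n f)) $$ (p,q) =
      mat n n (\<lambda>(p,q). A $$ (f p, f q)) $$ (p,q)"
    unfolding P_def .
qed (use A in auto)

lemma similar_mat_permute:
  fixes A :: "'a::field mat"
  assumes A: "A \<in> carrier_mat n n" and f: "bij_betw f {..<n} {..<n}"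
  shows "similar_mat (mat n n (\<lambda>(p,q). A $$ (f p, f q))) A"
proof -
  define P :: "'a mat" where "P = perm_mat n f"
  have P: "P \<in> carrier_mat n n" by (simp add: P_def)
  have PPt: "P * transpose_mat P = 1\<^sub>m n" unfolding P_def by (rule perm_mat_mult_transpose[OF f])
  have PtP: "transpose_mat P * P = 1\<^sub>m n"
    by (rule mat_mult_left_right_inverse[OF P _ PPt]) (use P in auto)
  have conj: "mat n n (\<lambda>(p,q). A $$ (f p, f q)) = P * A * transpose_mat P"
    unfolding P_def using f by (intro perm_mat_conjugate[OF A, symmetric]) (auto simp: bij_betw_def)
  have "{mat n n (\<lambda>(p,q). A $$ (f p, f q)), A, P, transpose_mat P} \<subseteq> carrier_mat n n"
    using A P by simp
  from similar_matI[OF this PPt PtP conj] show ?thesis .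
qed

lemma bij_betw_extend_pick:
  assumes "S \<subseteq> {..<n}"
  shows "\<exists>f. bij_betw f {..<n} {..<n} \<and> (\<forall>p < card S. f p = pick S p)"
proof -
  define i where "i = card S"
  define T where "T = {..<n} - S"
  define g where "g = (\<lambda>p. if p \<in> {..<i} then pick S p else pick T (p - i))"
  have fS: "finite S" using assms finite_subset by blast
  have pick_S: "bij_betw (pick S) {..<i} S" using bij_betw_pick[OF fS] by (simp add: i_def)
  have cT: "card T = n - i" unfolding T_def i_def using assms fS by (simp add: card_Diff_subset)
  have shift: "bij_betw (\<lambda>p. p - i) {i..<n} {..<n - i}"
    by (rule bij_betw_byWitness[where f' = "\<lambda>p. p + i"]) auto
  have "bij_betw (pick T) {..<n - i} T" using bij_betw_pick[of T] cT by (simp add: T_def)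
  then have "bij_betw (\<lambda>p. pick T (p - i)) {i..<n} T"
    using bij_betw_trans[OF shift] by (simp add: comp_def)
  then have "bij_betw g ({..<i} \<union> {i..<n}) (S \<union> T)"
    unfolding g_def by (rule bij_betw_disjoint_Un[OF pick_S]) (auto simp: T_def)
  moreover have "{..<i} \<union> {i..<n} = {..<n}"
    using card_mono[OF _ assms] unfolding i_def by auto
  moreover have "S \<union> T = {..<n}" using assms unfolding T_def by auto
  ultimately have "bij_betw g {..<n} {..<n}" by simp
  moreover have "\<forall>p < card S. g p = pick S p" by (simp add: g_def i_def)
  ultimately show ?thesis by blast
qed

lemma submatrix_principal_carrier:
  assumes "A \<in> carrier_mat n n" "S \<subseteq> {..<n}"
  shows "submatrix A S S \<in> carrier_mat (card S) (card S)"
proof -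
  have "{p. p < dim_row A \<and> p \<in> S} = S" "{p. p < dim_col A \<and> p \<in> S} = S"
    using assms by auto
  then show ?thesis by (intro carrier_matI) (simp_all only: dim_submatrix)
qed

lemma submatrix_principal_index:
  assumes "A \<in> carrier_mat n n" "S \<subseteq> {..<n}" "r < card S" "c < card S"
  shows "submatrix A S S $$ (r,c) = A $$ (pick S r, pick S c)"
proof -
  have "{p. p < dim_row A \<and> p \<in> S} = S" "{p. p < dim_col A \<and> p \<in> S} = S"
    using assms by auto
  then show ?thesis using assms(3,4) by (intro submatrix_index) simp_all
qed

lemma exists_similar_lead_sub_eq_submatrix:
  fixes A :: "'a::field mat"
  assumes A: "A \<in> carrier_mat n n" and S: "S \<subseteq> {..<n}"
  shows "\<exists>X \<in> carrier_mat n n. similar_mat X A \<and> lead_sub X (card S) = submatrix A S S"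
proof -
  define i where "i = card S"
  obtain f where f: "bij_betw f {..<n} {..<n}" and f_pick: "\<forall>p < i. f p = pick S p"
    using bij_betw_extend_pick[OF S] unfolding i_def by blast
  define X where "X = mat n n (\<lambda>(p,q). A $$ (f p, f q))"
  have X: "X \<in> carrier_mat n n" unfolding X_def by simp
  have I: "{..<i} \<subseteq> {..<n}" using card_mono[OF _ S] unfolding i_def by auto
  have "lead_sub X i = submatrix A S S"
  proof (rule eq_matI)
    fix r c assume "r < dim_row (submatrix A S S)" "c < dim_col (submatrix A S S)"
    then have rc: "r < i" "c < i" using submatrix_principal_carrier[OF A S] unfolding i_def by auto
    have "lead_sub X i $$ (r,c) = X $$ (pick {..<i} r, pick {..<i} c)"
      unfolding lead_sub_def using rc by (intro submatrix_principal_index[OF X I]) auto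
    also have "\<dots> = A $$ (f r, f c)"
      using rc I by (simp add: pick_lessThan X_def subset_eq)
    also have "\<dots> = submatrix A S S $$ (r,c)"
      using rc f_pick by (simp add: submatrix_principal_index[OF A S] i_def)
    finally show "lead_sub X i $$ (r,c) = submatrix A S S $$ (r,c)" .
  qed (use submatrix_principal_carrier[OF A S] submatrix_principal_carrier[OF X I] in
      \<open>auto simp: lead_sub_def i_def\<close>)
  then show ?thesis using X similar_mat_permute[OF A f] unfolding X_def i_def by blast
qed

section \<open>Stable rank of triangular principal submatrices\<close>

lemma submatrix_upper_triangular:
  assumes A: "A \<in> carrier_mat n n" and S: "S \<subseteq> {..<n}"
    and rows: "\<forall>p\<in>S. \<forall>q<p. A $$ (p,q) = 0"
  shows "upper_triangular (submatrix A S S)"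
proof
  fix r c assume "c < r" "r < dim_row (submatrix A S S)"
  then have "r < card S" "c < card S"
    using submatrix_principal_carrier[OF A S] by auto
  moreover have "pick S c < pick S r" using pick_mono_le \<open>c < r\<close> \<open>r < card S\<close> by blast
  ultimately show "submatrix A S S $$ (r,c) = 0"
    using rows pick_in_set_le[of r S] by (simp add: submatrix_principal_index[OF A S])
qed

lemma det_principal_submatrix_upper_triangular:
  fixes A :: "'a::comm_ring_1 mat"
  assumes A: "A \<in> carrier_mat n n" and S: "S \<subseteq> {..<n}"
    and rows: "\<forall>p\<in>S. \<forall>q<p. A $$ (p,q) = 0"
  shows "det (submatrix A S S) = (\<Prod>p\<in>S. A $$ (p,p))"
proof -
  have fS: "finite S" using S finite_subset by blast
  have "det (submatrix A S S) = prod_list (diag_mat (submatrix A S S))"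
    by (rule det_upper_triangular[OF submatrix_upper_triangular[OF A S rows]
          submatrix_principal_carrier[OF A S]])
  also have "\<dots> = (\<Prod>r<card S. A $$ (pick S r, pick S r))"
    using submatrix_principal_carrier[OF A S]
    by (simp add: diag_mat_def submatrix_principal_index[OF A S] prod.distinct_set_conv_list[symmetric]
        atLeast0LessThan)
  also have "\<dots> = (\<Prod>p\<in>S. A $$ (p,p))"
    using prod.reindex_bij_betw[OF bij_betw_pick[OF fS]] by simp
  finally show ?thesis .
qed

lemma stable_rank_upper_triangular:
  fixes Y :: "'a::field mat"
  assumes Y: "Y \<in> carrier_mat k k" and ut: "upper_triangular Y"
  shows "stable_rank Y = card {p. p < k \<and> Y $$ (p,p) \<noteq> 0}"
proof -
  define D where "D = {p. p < k \<and> Y $$ (p,p) \<noteq> 0}"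
  have D: "D \<subseteq> {..<k}" and fD: "finite D" unfolding D_def by auto
  have rows: "\<forall>p\<in>T. \<forall>q<p. Y $$ (p,q) = 0" if "T \<subseteq> {..<k}" for T
    using ut Y that unfolding upper_triangular_def by auto
  have minor: "det (submatrix Y T T) = (\<Prod>p\<in>T. Y $$ (p,p))" if "T \<subseteq> {..<k}" for T
    using det_principal_submatrix_upper_triangular[OF Y that rows[OF that]] .
  have minor_zero: "det (submatrix Y T T) = 0" if "T \<subseteq> {..<k}" "\<not> T \<subseteq> D" for T
    using that finite_subset[OF that(1)] by (auto simp: minor D_def)
  have sums: "principal_minor_sum Y j = (\<Sum>T\<in>{T. T \<subseteq> {..<k} \<and> card T = j}. det (submatrix Y T T))"
    for j using Y by (simp add: principal_minor_sum_def)
  have top: "principal_minor_sum Y (card D) \<noteq> 0"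
  proof -
    have "principal_minor_sum Y (card D) = (\<Sum>T\<in>{D}. det (submatrix Y T T))"
      unfolding sums
    proof (rule sum.mono_neutral_left[symmetric])
      show "finite {T. T \<subseteq> {..<k} \<and> card T = card D}"
        by (rule finite_subset[of _ "Pow {..<k}"]) auto
      show "\<forall>T\<in>{T. T \<subseteq> {..<k} \<and> card T = card D} - {D}. det (submatrix Y T T) = 0"
        using card_subset_eq[OF fD] minor_zero by blast
    qed (use D in auto)
    also have "\<dots> = det (submatrix Y D D)" by simp
    also have "\<dots> \<noteq> 0" using minor[OF D] fD by (simp add: D_def)
    finally show ?thesis .
  qed
  have beyond: "principal_minor_sum Y j = 0" if "card D < j" for j
    unfolding sums
  proof (rule sum.neutral, intro ballI)
    fix T assume T: "T \<in> {T. T \<subseteq> {..<k} \<and> card T = j}"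
    then have "\<not> T \<subseteq> D" using that card_mono[OF fD, of T] by auto
    then show "det (submatrix Y T T) = 0" using T minor_zero by blast
  qed
  show ?thesis unfolding stable_rank_def D_def[symmetric]
  proof (rule Greatest_equality)
    show "card D \<le> dim_row Y \<and> principal_minor_sum Y (card D) \<noteq> 0"
      using top card_mono[OF _ D] Y by simp
  qed (meson beyond not_le)
qed

lemma stable_rank_submatrix_triangular_rows:
  fixes A :: "'a::field mat"
  assumes A: "A \<in> carrier_mat n n" and S: "S \<subseteq> {..<n}"
    and rows: "\<forall>p\<in>S. \<forall>q<p. A $$ (p,q) = 0"
  shows "stable_rank (submatrix A S S) = card {p\<in>S. A $$ (p,p) \<noteq> 0}"
proof -
  have fS: "finite S" using S finite_subset by blast
  have "stable_rank (submatrix A S S) = card {r. r < card S \<and> A $$ (pick S r, pick S r) \<noteq> 0}"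
    using stable_rank_upper_triangular[OF submatrix_principal_carrier[OF A S]
        submatrix_upper_triangular[OF A S rows]] submatrix_principal_index[OF A S]
    by (metis (no_types, lifting) Collect_cong)
  also have "\<dots> = card (pick S ` {r. r < card S \<and> A $$ (pick S r, pick S r) \<noteq> 0})"
    using bij_betw_pick[OF fS] by (intro card_image[symmetric]) (auto simp: bij_betw_def inj_on_def)
  also have "pick S ` {r. r < card S \<and> A $$ (pick S r, pick S r) \<noteq> 0} = {p\<in>S. A $$ (p,p) \<noteq> 0}"
    using bij_betw_pick[OF fS] by (auto simp: bij_betw_def)
  finally show ?thesis .
qed

section \<open>Pascal blocks\<close>

definition pascal_mat :: "nat \<Rightarrow> 'a::comm_ring_1 mat" where
  "pascal_mat m = mat m m (\<lambda>(j,k). of_nat (j choose k))"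

text \<open>The conjugate \<open>P\<^sup>-\<^sup>1 J P\<close> of the nilpotent Jordan block \<open>J\<close> by the Pascal matrix \<open>P\<close>.
  All its rows except the last are those of \<open>1 + J\<close>, hence vanish left of a unit diagonal.\<close>
definition pascal_block :: "nat \<Rightarrow> 'a::comm_ring_1 mat" where
  "pascal_block m = mat m m (\<lambda>(k,l). (if k = l then 1 else 0) + (if Suc k = l then 1 else 0)
      - (if k = m - 1 then of_nat (m choose l) else 0))"

lemma pascal_block_dim[simp]: "dim_row (pascal_block m) = m" "dim_col (pascal_block m) = m"
  by (simp_all add: pascal_block_def)

lemma pascal_mat_dim[simp]: "dim_row (pascal_mat m) = m" "dim_col (pascal_mat m) = m"
  by (simp_all add: pascal_mat_def)

lemma pascal_block_carrier[simp]: "pascal_block m \<in> carrier_mat m m"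
  by (simp add: carrier_matI)

lemma pascal_mat_carrier[simp]: "pascal_mat m \<in> carrier_mat m m"
  by (simp add: carrier_matI)

lemma det_pascal_mat: "det (pascal_mat m :: 'a::comm_ring_1 mat) = 1"
proof -
  have "det (pascal_mat m :: 'a mat) = prod_list (diag_mat (pascal_mat m))"
    by (rule det_lower_triangular[OF _ pascal_mat_carrier]) (simp add: pascal_mat_def binomial_eq_0)
  also have "diag_mat (pascal_mat m :: 'a mat) = replicate m 1"
    by (rule nth_equalityI) (auto simp: diag_mat_def pascal_mat_def)
  finally show ?thesis by simp
qed

lemma pascal_mat_mult_pascal_block_index:
  assumes j: "j < m" and k: "k < m"
  shows "(pascal_mat m * pascal_block m) $$ (j,k) =
    (if Suc j < m then of_nat (Suc j choose k) else (0::'a::comm_ring_1))"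
proof -
  have "(pascal_mat m * pascal_block m) $$ (j,k) = (\<Sum>l = 0..<m. of_nat (j choose l) *
      ((if l = k then 1 else 0) + (if Suc l = k then 1 else 0)
        - (if l = m - 1 then of_nat (m choose k) else (0::'a))))"
    using assms by (simp add: pascal_mat_def pascal_block_def scalar_prod_def)
  also have "\<dots> = (\<Sum>l = 0..<m. if l = k then of_nat (j choose l) else 0)
      + (\<Sum>l = 0..<m. if Suc l = k then of_nat (j choose l) else 0)
      - (\<Sum>l = 0..<m. if l = m - 1 then of_nat (j choose l) * of_nat (m choose k) else (0::'a))"
  proof -
    have "of_nat (j choose l) * ((if l = k then 1 else 0) + (if Suc l = k then 1 else 0)
        - (if l = m - 1 then of_nat (m choose k) else 0))
      = (if l = k then of_nat (j choose l) else 0) + (if Suc l = k then of_nat (j choose l) else 0)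
        - (if l = m - 1 then of_nat (j choose l) * of_nat (m choose k) else (0::'a))" for l
      by (simp add: right_diff_distrib distrib_left)
    then show ?thesis by (simp only: sum.distrib sum_subtractf)
  qed
  also have "\<dots> = of_nat (j choose k) + (if 0 < k then of_nat (j choose (k - 1)) else 0)
      - of_nat (j choose (m - 1)) * of_nat (m choose k)"
  proof -
    have "(\<Sum>l = 0..<m. if Suc l = k then of_nat (j choose l) else (0::'a))
        = (if 0 < k then of_nat (j choose (k - 1)) else 0)"
      using k by (cases k) simp_all
    then show ?thesis using j k by simp
  qed
  also have "\<dots> = (if Suc j < m then of_nat (Suc j choose k) else 0)"
  proof (cases "Suc j < m")
    case True
    then show ?thesis by (cases k) (simp_all add: binomial_Suc_Suc binomial_eq_0)
  next
    case False
    then have "m = Suc j" using j by simp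
    then show ?thesis by (cases k) (simp_all add: binomial_Suc_Suc)
  qed
  finally show ?thesis .
qed

lemma jordan_block_mult_pascal_mat_index:
  assumes "j < m" "k < m"
  shows "(jordan_block m 0 * pascal_mat m) $$ (j,k) =
    (if Suc j < m then of_nat (Suc j choose k) else (0::'a::comm_ring_1))"
proof -
  have "(jordan_block m 0 * pascal_mat m) $$ (j,k) =
      (\<Sum>l = 0..<m. jordan_block m 0 $$ (j,l) * of_nat (l choose k))"
    using assms by (simp add: pascal_mat_def scalar_prod_def)
  also have "\<dots> = (\<Sum>l = 0..<m. if l = Suc j then of_nat (l choose k) else (0::'a))"
    using assms by (intro sum.cong) auto
  finally show ?thesis by simp
qed

lemma pascal_block_similar: "similar_mat (pascal_block m :: 'a::field mat) (jordan_block m 0)"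
proof -
  define L :: "'a mat" where "L = pascal_mat m"
  have L: "L \<in> carrier_mat m m" by (simp add: L_def)
  have "det L \<noteq> 0" unfolding L_def det_pascal_mat by simp
  from det_non_zero_imp_unit[OF L this] have "L \<in> Units (ring_mat TYPE('a) m ())" .
  then obtain L' where L': "L' \<in> carrier_mat m m" "L' * L = 1\<^sub>m m" "L * L' = 1\<^sub>m m"
    unfolding Units_def ring_mat_def by auto
  have intertwine: "L * pascal_block m = jordan_block m 0 * L"
  proof (rule eq_matI)
    fix j k assume "j < dim_row (jordan_block m 0 * L)" "k < dim_col (jordan_block m 0 * L)"
    then have "j < m" "k < m" using L by auto
    then show "(L * pascal_block m) $$ (j,k) = (jordan_block m 0 * L) $$ (j,k)"
      unfolding L_def by (simp only: pascal_mat_mult_pascal_block_index jordan_block_mult_pascal_mat_index)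
  qed (use L in auto)
  have "pascal_block m = (L' * L) * pascal_block m" using L'(2) by simp
  also have "\<dots> = L' * (L * pascal_block m)" by (rule assoc_mult_mat[OF L'(1) L pascal_block_carrier])
  also have "\<dots> = L' * jordan_block m 0 * L"
    unfolding intertwine by (rule assoc_mult_mat[OF L'(1) jordan_block_carrier L, symmetric])
  finally show ?thesis using L L' by (intro similar_matI[of _ _ L' L m]) auto
qed

section \<open>A representative of the orbit\<close>

definition part_block :: "nat \<Rightarrow> nat \<Rightarrow> 'a::comm_ring_1 mat" where
  "part_block t m = (if 0 < t then pascal_block m else jordan_block m 0)"

text \<open>Row \<open>p\<close> of \<open>part_block t m\<close> vanishes left of the diagonal iff its pattern entry is \<open>Some b\<close>,
  and then its diagonal entry is \<open>1\<close> or \<open>0\<close> according to \<open>b\<close>; \<open>None\<close> marks the last row of a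
  Pascal block.\<close>
definition part_pattern :: "nat \<Rightarrow> nat \<Rightarrow> bool option list" where
  "part_pattern t m =
    (if 0 < t then replicate (m - 1) (Some True) @ [None] else replicate m (Some False))"

lemma part_block_dim[simp]: "dim_row (part_block t m) = m" "dim_col (part_block t m) = m"
  by (simp_all add: part_block_def)

lemma part_block_carrier[simp]: "part_block t m \<in> carrier_mat m m"
  by (simp add: carrier_matI)

lemma length_part_pattern[simp]: "0 < m \<Longrightarrow> length (part_pattern t m) = m"
  by (simp add: part_pattern_def)

lemma part_block_similar: "similar_mat (part_block t m :: 'a::field mat) (jordan_block m 0)"
  using pascal_block_similar similar_mat_refl[OF jordan_block_carrier] by (auto simp: part_block_def)

lemma part_block_row:
  assumes "p < m" "part_pattern t m ! p = Some b"
  shows "(\<forall>q<p. (part_block t m :: 'a::comm_ring_1 mat) $$ (p,q) = 0) \<and>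
    (part_block t m :: 'a mat) $$ (p,p) = (if b then 1 else 0)"
proof (cases "0 < t")
  case True
  then have "p < m - 1" using assms by (cases "p < m - 1") (auto simp: part_pattern_def nth_append)
  then show ?thesis using True assms(2)
    by (auto simp: part_block_def part_pattern_def pascal_block_def nth_append)
next
  case False
  then show ?thesis using assms by (auto simp: part_block_def part_pattern_def jordan_block_def)
qed

fun pascal_jordan_mat :: "nat \<Rightarrow> nat list \<Rightarrow> 'a::comm_ring_1 mat" where
  "pascal_jordan_mat t [] = 0\<^sub>m 0 0"
| "pascal_jordan_mat t (m # ms) = four_block_mat (part_block t m)
      (0\<^sub>m m (sum_list ms)) (0\<^sub>m (sum_list ms) m) (pascal_jordan_mat (t - 1) ms)"

fun row_pattern :: "nat \<Rightarrow> nat list \<Rightarrow> bool option list" where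
  "row_pattern t [] = []"
| "row_pattern t (m # ms) = part_pattern t m @ row_pattern (t - 1) ms"

lemma pascal_jordan_mat_dim[simp]:
  "dim_row (pascal_jordan_mat t ms) = sum_list ms" "dim_col (pascal_jordan_mat t ms) = sum_list ms"
  by (induction ms arbitrary: t) auto

lemma pascal_jordan_mat_carrier: "pascal_jordan_mat t ms \<in> carrier_mat (sum_list ms) (sum_list ms)"
  by (rule carrier_matI) simp_all

lemma pascal_jordan_mat_similar:
  "similar_mat (pascal_jordan_mat t ms :: 'a::field mat) (jordan_matrix (map (\<lambda>m. (m, 0)) ms))"
proof (induction ms arbitrary: t)
  case Nil
  have "jordan_matrix [] = (0\<^sub>m 0 0 :: 'a mat)"
    by (rule eq_matI) (auto simp: jordan_matrix_def)
  then show ?case using similar_mat_refl[of "0\<^sub>m 0 0 :: 'a mat" 0] by simp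
next
  case (Cons m ms)
  have sum: "sum_list (map fst (map (\<lambda>m. (m, 0::'a)) ms)) = sum_list ms"
    by (induction ms) auto
  show ?case
    unfolding list.map jordan_matrix_Cons pascal_jordan_mat.simps sum
    by (rule similar_mat_four_block_0_0[OF part_block_similar Cons.IH part_block_carrier
          pascal_jordan_mat_carrier])
qed

lemma length_row_pattern: "\<forall>m\<in>set ms. 0 < m \<Longrightarrow> length (row_pattern t ms) = sum_list ms"
  by (induction ms arbitrary: t) auto

lemma pascal_jordan_mat_row:
  assumes "\<forall>m\<in>set ms. 0 < m" "p < sum_list ms" "row_pattern t ms ! p = Some b"
  shows "(\<forall>q<p. (pascal_jordan_mat t ms :: 'a::comm_ring_1 mat) $$ (p,q) = 0) \<and>
    (pascal_jordan_mat t ms :: 'a mat) $$ (p,p) = (if b then 1 else 0)"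
  using assms
proof (induction ms arbitrary: t p)
  case Nil
  then show ?case by simp
next
  case (Cons m ms)
  have m: "0 < m" using Cons.prems(1) by simp
  have A: "(part_block t m :: 'a mat) \<in> carrier_mat m m" by simp
  show ?case
  proof (cases "p < m")
    case True
    then have "part_pattern t m ! p = Some b" using Cons.prems(3) m by (simp add: nth_append)
    from part_block_row[OF True this, where 'a = 'a] show ?thesis using True A by auto
  next
    case False
    define p' where "p' = p - m"
    have p: "p = m + p'" and p': "p' < sum_list ms" using False Cons.prems(2) by (auto simp: p'_def)
    have "row_pattern (t - 1) ms ! p' = Some b" using Cons.prems(3) m by (simp add: p nth_append)
    with Cons.IH[of p' "t - 1"] Cons.prems(1) p'
    have IH: "(\<forall>q<p'. (pascal_jordan_mat (t - 1) ms :: 'a mat) $$ (p',q) = 0) \<and>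
        (pascal_jordan_mat (t - 1) ms :: 'a mat) $$ (p',p') = (if b then 1 else 0)"
      by simp
    have "(pascal_jordan_mat t (m # ms) :: 'a mat) $$ (p,q) = 0" if "q < p" for q
      using that IH A p p' by (cases "q < m") auto
    moreover have "(pascal_jordan_mat t (m # ms) :: 'a mat) $$ (p,p) = (if b then 1 else 0)"
      using IH A p p' by simp
    ultimately show ?thesis by blast
  qed
qed

lemma row_pattern_count_zero:
  "\<forall>m\<in>set ms. 0 < m \<Longrightarrow>
    length (filter ((=) (Some False)) (row_pattern t ms)) = sum_list (drop t ms)"
proof (induction ms arbitrary: t)
  case Nil
  then show ?case by simp
next
  case (Cons m ms)
  show ?case
  proof (cases t)
    case 0
    with Cons.IH[of 0] Cons.prems show ?thesis by (simp add: part_pattern_def filter_replicate)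
  next
    case (Suc t')
    with Cons.IH[of t'] Cons.prems show ?thesis by (simp add: part_pattern_def filter_replicate)
  qed
qed

lemma row_pattern_count_one:
  "\<forall>m\<in>set ms. 0 < m \<Longrightarrow>
    length (filter ((=) (Some True)) (row_pattern t ms)) + min t (length ms) = sum_list (take t ms)"
proof (induction ms arbitrary: t)
  case Nil
  then show ?case by simp
next
  case (Cons m ms)
  show ?case
  proof (cases t)
    case 0
    with Cons.IH[of 0] Cons.prems show ?thesis by (simp add: part_pattern_def filter_replicate)
  next
    case (Suc t')
    with Cons.IH[of t'] Cons.prems show ?thesis by (simp add: part_pattern_def filter_replicate)
  qed
qed

lemma sum_list_drop_le:
  "\<forall>m\<in>set ms. 0 < (m::nat) \<Longrightarrow> sum_list (drop t ms) \<le> sum_list ms - t"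
proof (induction ms arbitrary: t)
  case Nil
  then show ?case by simp
next
  case (Cons m ms)
  show ?case
  proof (cases t)
    case 0
    then show ?thesis by simp
  next
    case (Suc t')
    with Cons.IH[of t'] Cons.prems show ?thesis by (simp, arith)
  qed
qed

lemma exists_index_set_with_pattern_counts:
  fixes xs :: "bool option list"
  assumes "z \<le> length (filter ((=) (Some False)) xs)" "u \<le> length (filter ((=) (Some True)) xs)"
  shows "\<exists>S. S \<subseteq> {p. p < length xs \<and> xs ! p \<noteq> None} \<and> card S = z + u \<and>
    card {p\<in>S. xs ! p = Some True} = u"
proof -
  define Z where "Z = {p. p < length xs \<and> xs ! p = Some False}"
  define U where "U = {p. p < length xs \<and> xs ! p = Some True}"
  have "length (filter ((=) (Some False)) xs) = card Z"
    unfolding Z_def length_filter_conv_card by (rule arg_cong[where f = card]) auto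
  then have "z \<le> card Z" using assms(1) by simp
  then obtain Z' where Z': "Z' \<subseteq> Z" "card Z' = z" "finite Z'"
    by (rule obtain_subset_with_card_n)
  have "length (filter ((=) (Some True)) xs) = card U"
    unfolding U_def length_filter_conv_card by (rule arg_cong[where f = card]) auto
  then have "u \<le> card U" using assms(2) by simp
  then obtain U' where U': "U' \<subseteq> U" "card U' = u" "finite U'"
    by (rule obtain_subset_with_card_n)
  have "Z \<inter> U = {}" by (auto simp: Z_def U_def)
  then have disjoint: "Z' \<inter> U' = {}" using Z'(1) U'(1) by blast
  have true_part: "{p\<in>Z' \<union> U'. xs ! p = Some True} = U'"
    using Z'(1) U'(1) by (auto simp: Z_def U_def)
  show ?thesis
  proof (intro exI[of _ "Z' \<union> U'"] conjI)
    show "Z' \<union> U' \<subseteq> {p. p < length xs \<and> xs ! p \<noteq> None}"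
      using Z'(1) U'(1) by (auto simp: Z_def U_def)
    show "card (Z' \<union> U') = z + u"
      using card_Un_disjoint[OF Z'(3) U'(3) disjoint] Z'(2) U'(2) by simp
    show "card {p\<in>Z' \<union> U'. xs ! p = Some True} = u"
      unfolding true_part U'(2) ..
  qed
qed

lemma pascal_jordan_mat_triangular_rows:
  fixes ms :: "nat list" and n i :: nat
  defines "t \<equiv> n - i"
  defines "B \<equiv> pascal_jordan_mat t ms :: 'a::field mat"
  assumes pos: "\<forall>m\<in>set ms. 0 < m" and n: "sum_list ms = n" and i: "i \<le> n"
  shows "\<exists>S \<subseteq> {..<n}. card S = i \<and> (\<forall>p\<in>S. \<forall>q<p. B $$ (p,q) = 0) \<and>
    card {p\<in>S. B $$ (p,p) \<noteq> 0} = i - sum_list (drop t ms)"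
proof -
  define s where "s = sum_list (drop t ms)"
  define xs where "xs = row_pattern t ms"
  have len: "length xs = n" using length_row_pattern[OF pos] n by (simp add: xs_def)
  have s: "s \<le> i" using sum_list_drop_le[OF pos, of t] i n unfolding s_def t_def by simp
  have "sum_list (take t ms) + s = n"
    unfolding s_def n[symmetric] by (simp flip: sum_list_append)
  then have "i - s \<le> length (filter ((=) (Some True)) xs)"
    using row_pattern_count_one[OF pos, of t] min.cobounded1[of t "length ms"] i
    unfolding xs_def t_def by linarith
  moreover have "s \<le> length (filter ((=) (Some False)) xs)"
    using row_pattern_count_zero[OF pos, of t] unfolding xs_def s_def by simp
  ultimately obtain S where S: "S \<subseteq> {p. p < length xs \<and> xs ! p \<noteq> None}" "card S = s + (i - s)"
      "card {p\<in>S. xs ! p = Some True} = i - s"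
    using exists_index_set_with_pattern_counts by blast
  have row: "(\<forall>q<p. B $$ (p,q) = 0) \<and> B $$ (p,p) = (if xs ! p = Some True then 1 else 0)"
    if "p \<in> S" for p
  proof -
    have p: "p < sum_list ms" and "xs ! p \<noteq> None" using that S(1) len n by auto
    then obtain b where b: "xs ! p = Some b" by blast
    have "(\<forall>q<p. B $$ (p,q) = 0) \<and> B $$ (p,p) = (if b then 1 else 0)"
      using pascal_jordan_mat_row[OF pos p b[unfolded xs_def]] unfolding B_def .
    then show ?thesis using b by simp
  qed
  have diag: "{p\<in>S. B $$ (p,p) \<noteq> 0} = {p\<in>S. xs ! p = Some True}"
    using row by (intro Collect_cong) (auto split: if_split_asm)
  show ?thesis
  proof (intro exI[of _ S] conjI)
    show "S \<subseteq> {..<n}" using S(1) len by auto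
    show "card S = i" using S(2) s by simp
    show "\<forall>p\<in>S. \<forall>q<p. B $$ (p,q) = 0" using row by simp
    show "card {p\<in>S. B $$ (p,p) \<noteq> 0} = i - sum_list (drop t ms)"
      unfolding diag S(3) s_def ..
  qed
qed

theorem lemma2p3:
  fixes lam :: "nat list" and n i :: nat
  assumes "is_partition lam n"
    and "1 \<le> i" and "i \<le> n - 1"
  shows "\<exists>X :: 'k :: alg_closed_field mat. X \<in> nilpotent_orbit n lam \<and>
           int (stable_rank (lead_sub X i)) = d_lam n lam i"
proof -
  have pos: "\<forall>m\<in>set lam. 0 < m" and n: "sum_list lam = n"
    using assms(1) unfolding is_partition_def by auto
  define B :: "'k mat" where "B = pascal_jordan_mat (n - i) lam"
  have B: "B \<in> carrier_mat n n"
    unfolding B_def using pascal_jordan_mat_carrier[of "n - i" lam] n by simp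
  have "i \<le> n" using assms(3) by simp
  then obtain S where S: "S \<subseteq> {..<n}" "card S = i" and rows: "\<forall>p\<in>S. \<forall>q<p. B $$ (p,q) = 0"
    and diag: "card {p\<in>S. B $$ (p,p) \<noteq> 0} = i - sum_list (drop (n - i) lam)"
    using pascal_jordan_mat_triangular_rows[OF pos n] unfolding B_def by blast
  obtain X where X: "X \<in> carrier_mat n n" "similar_mat X B" and lead: "lead_sub X i = submatrix B S S"
    using exists_similar_lead_sub_eq_submatrix[OF B S(1)] S(2) by blast
  have "similar_mat X (jordan_matrix (map (\<lambda>m. (m, 0)) lam))"
    using similar_mat_trans[OF X(2)[unfolded B_def] pascal_jordan_mat_similar] .
  then have "X \<in> nilpotent_orbit n lam" using X(1) unfolding nilpotent_orbit_def by blast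
  moreover have "stable_rank (lead_sub X i) = i - sum_list (drop (n - i) lam)"
    unfolding lead diag[symmetric] by (rule stable_rank_submatrix_triangular_rows[OF B S(1) rows])
  moreover have "sum_list (drop (n - i) lam) \<le> i"
    using sum_list_drop_le[OF pos, of "n - i"] assms(3) n by simp
  ultimately show ?thesis unfolding d_lam_def by (intro exI[of _ X] conjI) (simp_all add: of_nat_diff)
qed

end
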